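(* Let $\vec\ell\in\mathcal W^N_{\mathbb R}$, $p\in\mathbb C$, $\vec\xi=(\xi_1,\dots,\xi_N)\in\mathbb C^N$, and $\vec u=(u_1,\dots,u_k),\vec v=(v_1,\dots,v_k)\in(\mathbb C\setminus\{\xi_1,\dots,\xi_N\})^k$ with $u_1,\dots,u_k,v_1,\dots,v_k$ pairwise distinct. Then $$\frac{\mathcal B_{\vec\ell,p}(\vec u,\vec\xi/\vec v)}{\mathcal B_{\vec\ell}(\vec\xi)}=\frac{D(\vec u;-\vec v)}{\Delta(\vec u)\Delta(-\vec v)}\det\Big(\frac1{u_i-v_j}\frac{\mathcal B_{\vec\ell,p}(u_i,\vec\xi/v_j)}{\mathcal B_{\vec\ell}(\vec\xi)}\Big)_{i,j=1}^k.$$ Moreover, if $\xi_1,\dots,\xi_N$ are distinct and $u,v\in\mathbb C\setminus\{\xi_1,\dots,\xi_N\}$ with $u\ne v$, then $$\frac{\mathcal B_{\vec\ell,p}(u,\vec\xi/v)}{\mathcal B_{\vec\ell}(\vec\xi)}=(u-v)\prod_{i=1}^N\frac{v-\xi_i}{u-\xi_i}\Big(\frac{e^{p(u-v)}}{u-v}+\mathrm a(u)'A_{\vec\ell}(\vec\xi)^{-1}\mathrm b(v)\Big),$$ where $\mathrm a(u)=(e^{\ell_1u},\dots,e^{\ell_Nu})$, $\mathrm b(v)=\big(\frac{e^{p(\xi_1-v)}}{v-\xi_1},\dots,\frac{e^{p(\xi_N-v)}}{v-\xi_N}\big)$ are column vectors, $'$ denotes transpose, and $A_{\vec\ell}(\vec\xi)=(e^{\xi_i\ell_j})_{i,j=1}^N$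 (assumed invertible; for non-distinct $\ell$ the identities are understood by continuity).
   Context: $\Delta(\vec x)=\prod_{i<j}(x_i-x_j)$, $D(\vec x;\vec y)=\prod_{i,j}(x_i+y_j)$. $\mathcal B_{\vec\ell}(z)=\det(e^{z_i\ell_j})/\Delta(z)$. For $\vec u\in\mathbb C^{N+k}$, $\vec v\in\mathbb C^k$, $$\mathcal B_{\vec\ell,p}(\vec u/\vec v)=(-1)^{Nk}\frac{D(\vec u;-\vec v)}{\Delta(\vec u)\Delta(-\vec v)}\det\Big(\big(\tfrac{e^{p(u_i-v_j)}}{u_i-v_j}\big)_{j\le k}\ \ (e^{u_i\ell_j})_{j\le N}\Big)_{i\le N+k},$$ extended analytically; $(\vec u,\vec\xi)$ denotes concatenation. *)

theory Defs
  imports "HOL-Analysis.Analysis" "Jordan_Normal_Form.Determinant"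
    "Jordan_Normal_Form.Gauss_Jordan_Elimination"
begin

text \<open>Vectors in C^n are encoded as functions nat => complex, only the
  coordinates 0..n-1 being relevant (0-based indexing).
  The space nat => complex carries the product topology.\<close>

definition trunc_vec :: "nat \<Rightarrow> (nat \<Rightarrow> complex) \<Rightarrow> (nat \<Rightarrow> complex)" where
  "trunc_vec n x = (\<lambda>i. if i < n then x i else 0)"

definition concat_vec :: "nat \<Rightarrow> (nat \<Rightarrow> complex) \<Rightarrow> (nat \<Rightarrow> complex) \<Rightarrow> (nat \<Rightarrow> complex)" where
  "concat_vec k u xi = (\<lambda>i. if i < k then u i else xi (i - k))"

definition Vdm :: "nat \<Rightarrow> (nat \<Rightarrow> complex) \<Rightarrow> complex" where
  "Vdm n x = (\<Prod>i<n. \<Prod>j\<in>{i<..<n}. x i - x j)"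

definition Dprod :: "nat \<Rightarrow> nat \<Rightarrow> (nat \<Rightarrow> complex) \<Rightarrow> (nat \<Rightarrow> complex) \<Rightarrow> complex" where
  "Dprod n m x y = (\<Prod>i<n. \<Prod>j<m. x i + y j)"

definition generic_pts :: "nat \<Rightarrow> (nat \<Rightarrow> complex) set" where
  "generic_pts n = {w. (\<forall>i\<ge>n. w i = 0) \<and> (\<forall>i<n. \<forall>j<n. i \<noteq> j \<longrightarrow> w i \<noteq> w j)}"

definition B_raw :: "nat \<Rightarrow> (nat \<Rightarrow> real) \<Rightarrow> (nat \<Rightarrow> complex) \<Rightarrow> complex" where
  "B_raw N l z = det (mat N N (\<lambda>(i,j). exp (z i * complex_of_real (l j)))) / Vdm N z"

text \<open>B_l(z), extended analytically (value at generic points, limit from generic points elsewhere).\<close>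
definition B_fun :: "nat \<Rightarrow> (nat \<Rightarrow> real) \<Rightarrow> (nat \<Rightarrow> complex) \<Rightarrow> complex" where
  "B_fun N l z = (if trunc_vec N z \<in> generic_pts N then B_raw N l (trunc_vec N z)
     else Lim (at (trunc_vec N z) within generic_pts N) (B_raw N l))"

definition Bp_raw :: "nat \<Rightarrow> nat \<Rightarrow> (nat \<Rightarrow> real) \<Rightarrow> complex \<Rightarrow>
    (nat \<Rightarrow> complex) \<Rightarrow> (nat \<Rightarrow> complex) \<Rightarrow> complex" where
  "Bp_raw N k l p u v =
     (-1) ^ (N * k) * Dprod (N + k) k u (\<lambda>j. - v j)
       / (Vdm (N + k) u * Vdm k (\<lambda>j. - v j))
     * det (mat (N + k) (N + k) (\<lambda>(i,j).
          if j < k then exp (p * (u i - v j)) / (u i - v j)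
          else exp (u i * complex_of_real (l (j - k)))))"

definition generic_pair :: "nat \<Rightarrow> nat \<Rightarrow> ((nat \<Rightarrow> complex) \<times> (nat \<Rightarrow> complex)) set" where
  "generic_pair n m = {(a, b). a \<in> generic_pts n \<and> b \<in> generic_pts m \<and>
      (\<forall>i<n. \<forall>j<m. a i \<noteq> b j)}"

definition Bp_fun :: "nat \<Rightarrow> nat \<Rightarrow> (nat \<Rightarrow> real) \<Rightarrow> complex \<Rightarrow>
    (nat \<Rightarrow> complex) \<Rightarrow> (nat \<Rightarrow> complex) \<Rightarrow> complex" where
  "Bp_fun N k l p u v =
     (if (trunc_vec (N + k) u, trunc_vec k v) \<in> generic_pair (N + k) k
      then Bp_raw N k l p (trunc_vec (N + k) u) (trunc_vec k v) else
     Lim (at (trunc_vec (N + k) u, trunc_vec k v) within generic_pair (N + k) k)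
         (\<lambda>(a, b). Bp_raw N k l p a b))"

definition weyl_chamber :: "nat \<Rightarrow> (nat \<Rightarrow> real) set" where
  "weyl_chamber N = {l. \<forall>i j. i \<le> j \<longrightarrow> j < N \<longrightarrow> l j \<le> l i}"

definition A_mat :: "nat \<Rightarrow> (nat \<Rightarrow> real) \<Rightarrow> (nat \<Rightarrow> complex) \<Rightarrow> complex mat" where
  "A_mat N l xi = mat N N (\<lambda>(i,j). exp (xi i * complex_of_real (l j)))"

end

theory Submission
  imports Defs "HOL-Complex_Analysis.Complex_Analysis"
begin

text \<open>Both \<open>B\<close> and \<open>B\<^sub>p\<close> are ratios \<open>det (F\<^sub>j(a\<^sub>i)) / \<Delta>(a)\<close> with entire \<open>F\<^sub>j\<close> (for \<open>B\<^sub>p\<close> after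
  clearing the poles row by row). Up to sign such a ratio is the determinant of the divided
  differences of the \<open>F\<^sub>j\<close> at the nodes, and Hermite's contour integral for divided differences
  is continuous in the nodes, so the ratios extend continuously to coinciding nodes.

  At distinct \<open>\<xi>\<close> the first \<open>k\<close> columns of the matrix of \<open>B\<^sub>\<ell>\<^sub>,\<^sub>p(u,\<xi>/v)\<close> have a Schur complement
  with respect to \<open>A\<^sub>\<ell>(\<xi>)\<close> whose \<open>(i,j)\<close> entry involves only \<open>u\<^sub>i\<close> and \<open>v\<^sub>j\<close>; the case \<open>k = 1\<close>
  identifies it with the single ratio, and \<open>det M = det A \<cdot> det (M/A)\<close> gives both identities up to
  bookkeeping of Vandermonde and Cauchy factors. For non-distinct \<open>\<xi>\<close> the first identity passes to
  the limit along distinct nodes that avoid \<open>u\<close> and \<open>v\<close>.\<close>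

section \<open>Divided differences\<close>

definition lagrange_weight :: "nat \<Rightarrow> (nat \<Rightarrow> complex) \<Rightarrow> nat \<Rightarrow> complex" where
  "lagrange_weight m a c = 1 / (\<Prod>b\<in>{..m}-{c}. a c - a b)"

definition divided_difference :: "nat \<Rightarrow> (nat \<Rightarrow> complex) \<Rightarrow> (complex \<Rightarrow> complex) \<Rightarrow> complex" where
  "divided_difference m a g = (\<Sum>c\<le>m. lagrange_weight m a c * g (a c))"

lemma lagrange_weight_Suc:
  "c \<le> m \<Longrightarrow> lagrange_weight (Suc m) a c = lagrange_weight m a c / (a c - a (Suc m))"
proof -
  assume "c \<le> m"
  then have "{..Suc m} - {c} = insert (Suc m) ({..m} - {c})" by auto
  with \<open>c \<le> m\<close> show ?thesis unfolding lagrange_weight_def by (simp add: field_simps)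
qed

lemma lagrange_weight_last: "lagrange_weight (Suc m) a (Suc m) = 1 / (\<Prod>b\<le>m. a (Suc m) - a b)"
proof -
  have "{..Suc m} - {Suc m} = {..m}" by auto
  then show ?thesis unfolding lagrange_weight_def by simp
qed

lemma inverse_prod_eq_divided_difference:
  assumes "\<forall>i\<le>m. \<forall>j\<le>m. i \<noteq> j \<longrightarrow> a i \<noteq> a j" and "\<forall>b\<le>m. w \<noteq> a b"
  shows "1 / (\<Prod>b\<le>m. w - a b) = divided_difference m a (\<lambda>z. 1 / (w - z))"
  using assms
proof (induction m arbitrary: w)
  case 0
  then show ?case by (simp add: divided_difference_def lagrange_weight_def)
next
  case (Suc m)
  have dd: "divided_difference n a (\<lambda>z. 1 / (x - z)) = (\<Sum>c\<le>n. lagrange_weight n a c / (x - a c))" for n x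
    by (simp add: divided_difference_def)
  let ?z = "a (Suc m)" and ?l = "lagrange_weight m a" and ?l' = "lagrange_weight (Suc m) a"
  have distinct: "\<forall>i\<le>m. \<forall>j\<le>m. i \<noteq> j \<longrightarrow> a i \<noteq> a j" using Suc.prems(1) by auto
  have wz: "w \<noteq> ?z" and wc: "\<And>c. c \<le> m \<Longrightarrow> w \<noteq> a c" using Suc.prems(2) by auto
  have cz: "\<And>c. c \<le> m \<Longrightarrow> a c \<noteq> ?z" using Suc.prems(1) by force
  have IH_w: "1 / (\<Prod>b\<le>m. w - a b) = (\<Sum>c\<le>m. ?l c / (w - a c))"
    using Suc.IH[OF distinct] wc by (auto simp: dd)
  have IH_z: "1 / (\<Prod>b\<le>m. ?z - a b) = (\<Sum>c\<le>m. ?l c / (?z - a c))"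
    using Suc.IH[OF distinct] cz by (force simp: dd)
  have split: "?l c / (w - a c) * (1 / (w - ?z))
      = ?l' c / (w - a c) - ?l c / (a c - ?z) / (w - ?z)" if "c \<le> m" for c
  proof -
    have "w - a c \<noteq> 0" "w - ?z \<noteq> 0" "a c - ?z \<noteq> 0" using cz[OF that] wc[OF that] wz by auto
    then have "1 / (w - a c) * (1 / (w - ?z)) = (1 / (w - a c) - 1 / (w - ?z)) / (a c - ?z)"
      by (simp add: divide_simps)
    then show ?thesis by (simp add: lagrange_weight_Suc[OF that] divide_inverse algebra_simps) (metis distrib_left)
  qed
  have "1 / (\<Prod>b\<le>Suc m. w - a b) = 1 / (\<Prod>b\<le>m. w - a b) * (1 / (w - ?z))"
    by simp
  also have "\<dots> = (\<Sum>c\<le>m. ?l c / (w - a c) * (1 / (w - ?z)))"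
    unfolding IH_w by (rule sum_distrib_right)
  also have "\<dots> = (\<Sum>c\<le>m. ?l' c / (w - a c) - ?l c / (a c - ?z) / (w - ?z))"
    by (rule sum.cong[OF refl], rule split) simp
  also have "\<dots> = (\<Sum>c\<le>m. ?l' c / (w - a c)) - (\<Sum>c\<le>m. ?l c / (a c - ?z)) / (w - ?z)"
    by (simp add: sum_subtractf sum_divide_distrib)
  also have "(\<Sum>c\<le>m. ?l c / (a c - ?z)) = - (\<Sum>c\<le>m. ?l c / (?z - a c))"
    by (simp add: sum_negf[symmetric] minus_divide_right)
  also have "\<dots> = - ?l' (Suc m)"
    using IH_z lagrange_weight_last by simp
  finally show ?case by (simp add: dd)
qed

text \<open>Hermite's formula for the divided difference; unlike the Lagrange form it stays continuous
  in the nodes where they coincide.\<close>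

definition hermite_integral :: "real \<Rightarrow> nat \<Rightarrow> (nat \<Rightarrow> complex) \<Rightarrow> (complex \<Rightarrow> complex) \<Rightarrow> complex" where
  "hermite_integral R m a g
     = contour_integral (circlepath 0 R) (\<lambda>w. g w / (\<Prod>b\<le>m. w - a b)) / (2 * of_real pi * \<i>)"

lemma hermite_integral_eq_divided_difference:
  assumes holo: "g holomorphic_on UNIV"
    and distinct: "\<forall>i\<le>m. \<forall>j\<le>m. i \<noteq> j \<longrightarrow> a i \<noteq> a j"
    and inside: "\<forall>b\<le>m. norm (a b) < R"
  shows "hermite_integral R m a g = divided_difference m a g"
proof -
  have "((\<lambda>w. lagrange_weight m a c * (g w / (w - a c))) has_contour_integral
           (lagrange_weight m a c * (2 * of_real pi * \<i> * g (a c)))) (circlepath 0 R)" if "c \<le> m" for c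
    using holo that inside
    by (intro has_contour_integral_lmul Cauchy_integral_circlepath_simple)
       (auto intro: holomorphic_on_subset)
  then have "((\<lambda>w. \<Sum>c\<le>m. lagrange_weight m a c * (g w / (w - a c))) has_contour_integral
           (\<Sum>c\<le>m. lagrange_weight m a c * (2 * of_real pi * \<i> * g (a c)))) (circlepath 0 R)"
    by (intro has_contour_integral_sum) auto
  then have "((\<lambda>w. \<Sum>c\<le>m. lagrange_weight m a c * (g w / (w - a c))) has_contour_integral
           (2 * of_real pi * \<i> * divided_difference m a g)) (circlepath 0 R)"
    by (simp add: divided_difference_def sum_distrib_left algebra_simps)
  then have "((\<lambda>w. g w / (\<Prod>b\<le>m. w - a b)) has_contour_integral
           (2 * of_real pi * \<i> * divided_difference m a g)) (circlepath 0 R)"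
  proof (rule has_contour_integral_eq)
    fix w assume "w \<in> path_image (circlepath 0 R)"
    with inside have "\<forall>b\<le>m. w \<noteq> a b"
      by (auto simp: path_image_circlepath)
    then have "1 / (\<Prod>b\<le>m. w - a b) = (\<Sum>c\<le>m. lagrange_weight m a c / (w - a c))"
      using inverse_prod_eq_divided_difference[OF distinct]
      by (simp add: divided_difference_def)
    then have "g w / (\<Prod>b\<le>m. w - a b) = (\<Sum>c\<le>m. g w * (lagrange_weight m a c / (w - a c)))"
      by (metis mult_1_right sum_distrib_left times_divide_eq_right)
    then show "(\<Sum>c\<le>m. lagrange_weight m a c * (g w / (w - a c))) = g w / (\<Prod>b\<le>m. w - a b)"
      by (simp add: algebra_simps)
  qed
  then show ?thesis
    unfolding hermite_integral_def by (simp add: contour_integral_unique)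
qed

lemma continuous_on_contour_integral_circlepath:
  fixes H :: "'x::topological_space \<Rightarrow> complex \<Rightarrow> complex"
  assumes cont: "continuous_on (U \<times> sphere c r) (\<lambda>(x, w). H x w)" and "0 \<le> r"
  shows "continuous_on U (\<lambda>x. contour_integral (circlepath c r) (H x))"
proof -
  have "contour_integral (circlepath c r) (H x)
      = integral (cbox 0 1) (\<lambda>t. H x (circlepath c r t) * (2 * pi * \<i> * r * exp (2 * of_real pi * \<i> * t)))" for x
    by (simp add: contour_integral_integral vector_derivative_circlepath cbox_interval)
  moreover have "continuous_on (U \<times> cbox 0 1)
      (\<lambda>(x, t). H x (circlepath c r t) * (2 * pi * \<i> * r * exp (2 * of_real pi * \<i> * t)))"
  proof -
    have "c + r * exp (2 * of_real pi * \<i> * of_real t) \<in> sphere c r" for t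
      using \<open>0 \<le> r\<close> by (simp add: dist_norm norm_mult)
    then have "continuous_on (U \<times> cbox 0 1)
        (\<lambda>y. H (fst y) (c + r * exp (2 * of_real pi * \<i> * of_real (snd y))))"
      by (intro continuous_on_compose2[OF cont,
            of _ "\<lambda>y. (fst y, c + r * exp (2 * of_real pi * \<i> * of_real (snd y)))", simplified])
         (auto intro!: continuous_intros)
    then show ?thesis
      by (auto simp: case_prod_unfold circlepath intro!: continuous_intros)
  qed
  ultimately show ?thesis
    using integral_continuous_on_param[of U "0::real" 1] by (simp add: cbox_interval)
qed

lemma continuous_on_hermite_integral:
  fixes F :: "complex \<Rightarrow> 'q::topological_space \<Rightarrow> complex"
  assumes cont: "continuous_on UNIV (\<lambda>(w, q). F w q)" and "0 \<le> R"
  shows "continuous_on {x. \<forall>b\<le>m. norm (fst x b) < R} (\<lambda>x. hermite_integral R m (fst x) (\<lambda>w. F w (snd x)))"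
proof -
  let ?U = "{x :: (nat \<Rightarrow> complex) \<times> 'q. \<forall>b\<le>m. norm (fst x b) < R}"
  have coord: "continuous_on S (\<lambda>y. fst (fst y) b)" for S :: "(((nat \<Rightarrow> complex) \<times> 'q) \<times> complex) set" and b
    by (rule continuous_on_product_then_coordinatewise, intro continuous_intros)
  have "continuous_on (?U \<times> sphere 0 R) (\<lambda>y. F (snd y) (snd (fst y)))"
    using continuous_on_compose2[OF cont, of "?U \<times> sphere 0 R" "\<lambda>y. (snd y, snd (fst y))"]
    by (simp add: continuous_intros)
  moreover have "(\<Prod>b\<le>m. w - fst x b) \<noteq> 0" if "x \<in> ?U" and "w \<in> sphere 0 R" for x w
    using that by fastforce
  ultimately have "continuous_on (?U \<times> sphere 0 R) (\<lambda>(x, w). F w (snd x) / (\<Prod>b\<le>m. w - fst x b))"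
    unfolding case_prod_unfold by (auto intro!: continuous_intros coord)
  then show ?thesis
    unfolding hermite_integral_def
    by (intro continuous_intros continuous_on_contour_integral_circlepath \<open>0 \<le> R\<close>) auto
qed

lemma det_mat_eq_sum_permutations:
  "det (mat n n (\<lambda>(i, j). f i j)) = (\<Sum>p | p permutes {0..<n}. signof p * (\<Prod>i=0..<n. f i (p i)))"
proof -
  have "det (mat n n (\<lambda>(i, j). f i j))
      = (\<Sum>p | p permutes {0..<n}. signof p * (\<Prod>i=0..<n. mat n n (\<lambda>(i, j). f i j) $$ (i, p i)))"
    by (rule det_def') simp
  also have "\<dots> = (\<Sum>p | p permutes {0..<n}. signof p * (\<Prod>i=0..<n. f i (p i)))"
    by (intro sum.cong refl arg_cong2[where f = "(*)"] prod.cong) (auto dest: permutes_in_image)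
  finally show ?thesis .
qed

lemma tendsto_det_mat:
  fixes f :: "'x \<Rightarrow> nat \<Rightarrow> nat \<Rightarrow> 'a::real_normed_field"
  assumes "\<And>i j. i < n \<Longrightarrow> j < n \<Longrightarrow> ((\<lambda>x. f x i j) \<longlongrightarrow> g i j) F"
  shows "((\<lambda>x. det (mat n n (\<lambda>(i, j). f x i j))) \<longlongrightarrow> det (mat n n (\<lambda>(i, j). g i j))) F"
  unfolding det_mat_eq_sum_permutations
proof (intro tendsto_intros)
  fix p i assume "p \<in> {p. p permutes {0..<n}}" "i \<in> {0..<n}"
  then show "((\<lambda>x. f x i (p i)) \<longlongrightarrow> g i (p i)) F"
    using assms by (auto dest: permutes_in_image)
qed

lemma det_mat_scale_rows_cols:
  "det (mat n n (\<lambda>(i, j). r i * s j * f i j))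
     = (\<Prod>i<n. r i) * (\<Prod>j<n. s j) * det (mat n n (\<lambda>(i, j). f i j :: 'a :: comm_ring_1))"
proof -
  have "(\<Prod>i=0..<n. r i * s (p i) * f i (p i)) = (\<Prod>i<n. r i) * (\<Prod>j<n. s j) * (\<Prod>i=0..<n. f i (p i))"
    if "p permutes {0..<n}" for p
    using prod.permute[OF that, of s]
    by (simp add: prod.distrib atLeast0LessThan o_def)
  then show ?thesis
    unfolding det_mat_eq_sum_permutations by (simp add: sum_distrib_left algebra_simps)
qed

lemma prod_lower_differences_eq_Vdm:
  "(\<Prod>m<n. \<Prod>b<m. a m - a b) = (\<Prod>m<n. (-1::complex) ^ m) * Vdm n a"
proof (induction n)
  case 0
  then show ?case by (simp add: Vdm_def)
next
  case (Suc n)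
  have "(\<Prod>j\<in>{i<..<Suc n}. a i - a j) = (\<Prod>j\<in>{i<..<n}. a i - a j) * (a i - a n)" if "i < n" for i
  proof -
    have "{i<..<Suc n} = insert n {i<..<n}" using that by auto
    then show ?thesis by simp
  qed
  moreover have "{n<..<Suc n} = {}" by auto
  ultimately have Vdm_Suc: "Vdm (Suc n) a = Vdm n a * (\<Prod>i<n. a i - a n)"
    by (simp add: Vdm_def prod.distrib)
  have "(\<Prod>b<n. a n - a b) = (\<Prod>b<n. (-1) * (a b - a n))"
    by (rule prod.cong) auto
  also have "\<dots> = (-1) ^ n * (\<Prod>i<n. a i - a n)"
    by (simp only: prod.distrib prod_constant card_lessThan)
  finally have "(\<Prod>b<n. a n - a b) = (-1) ^ n * (\<Prod>i<n. a i - a n)" .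
  then show ?case
    using Suc Vdm_Suc by (simp add: algebra_simps)
qed

lemma Vdm_nonzero:
  "\<forall>i<n. \<forall>j<n. i \<noteq> j \<longrightarrow> a i \<noteq> a j \<Longrightarrow> Vdm n a \<noteq> 0"
  unfolding Vdm_def by (auto simp: prod_zero_iff)

text \<open>The divided-difference matrix is the lower triangular matrix of Lagrange weights times
  \<open>(F\<^sub>j(a\<^sub>i))\<close>; its diagonal produces the Vandermonde factor.\<close>

lemma det_div_Vdm_eq_det_divided_differences:
  assumes distinct: "\<forall>i<n. \<forall>j<n. i \<noteq> j \<longrightarrow> a i \<noteq> a j"
  shows "det (mat n n (\<lambda>(i, j). F j (a i))) / Vdm n a
     = (\<Prod>m<n. (-1::complex) ^ m) * det (mat n n (\<lambda>(m, j). divided_difference m a (F j)))"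
proof -
  let ?F = "mat n n (\<lambda>(i, j). F j (a i))"
  let ?W = "mat n n (\<lambda>(m, c). if c \<le> m then lagrange_weight m a c else 0)"
  let ?D = "mat n n (\<lambda>(m, j). divided_difference m a (F j))"
  have "?D = ?W * ?F"
  proof (rule eq_matI)
    fix m j assume "m < dim_row (?W * ?F)" "j < dim_col (?W * ?F)"
    then have m: "m < n" and j: "j < n" by auto
    have "(?W * ?F) $$ (m, j) = (\<Sum>c<n. (if c \<le> m then lagrange_weight m a c else 0) * F j (a c))"
      using m j by (simp add: scalar_prod_def atLeast0LessThan)
    also have "\<dots> = divided_difference m a (F j)"
      unfolding divided_difference_def using m
      by (intro sum.mono_neutral_cong_right) auto
    finally show "?D $$ (m, j) = (?W * ?F) $$ (m, j)" using m j by simp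
  qed auto
  moreover have "det ?W = 1 / (\<Prod>m<n. \<Prod>b<m. a m - a b)"
  proof -
    have "det ?W = prod_list (diag_mat ?W)"
      by (rule det_lower_triangular[of n]) auto
    also have "\<dots> = (\<Prod>m<n. 1 / (\<Prod>b\<in>{..m}-{m}. a m - a b))"
      by (simp add: diag_mat_def prod.distinct_set_conv_list[symmetric] atLeast0LessThan lagrange_weight_def)
    also have "\<dots> = 1 / (\<Prod>m<n. \<Prod>b<m. a m - a b)"
    proof -
      have "{..m} - {m} = {..<m}" for m :: nat by auto
      then show ?thesis by (simp add: prod_dividef)
    qed
    finally show ?thesis .
  qed
  moreover have "(\<Prod>m<n. \<Prod>b<m. a m - a b) \<noteq> 0"
    using distinct by (auto simp: prod_zero_iff)
  ultimately have "det ?F = (\<Prod>m<n. \<Prod>b<m. a m - a b) * det ?D"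
    by (simp add: det_mult[of ?W n ?F] field_simps)
  then show ?thesis
    using Vdm_nonzero[OF distinct] by (simp add: prod_lower_differences_eq_Vdm)
qed

lemma det_div_Vdm_eq_det_hermite_integrals:
  assumes holo: "\<And>j. F j holomorphic_on UNIV"
    and distinct: "\<forall>i<n. \<forall>j<n. i \<noteq> j \<longrightarrow> a i \<noteq> a j" and inside: "\<forall>b<n. norm (a b) < R"
  shows "det (mat n n (\<lambda>(i, j). F j (a i))) / Vdm n a
     = (\<Prod>m<n. (-1::complex) ^ m) * det (mat n n (\<lambda>(m, j). hermite_integral R m a (F j)))"
proof -
  have "hermite_integral R m a (F j) = divided_difference m a (F j)" if "m < n" for m j
    using distinct inside that by (intro hermite_integral_eq_divided_difference holo) auto
  then have "mat n n (\<lambda>(m, j). hermite_integral R m a (F j)) = mat n n (\<lambda>(m, j). divided_difference m a (F j))"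
    by (intro cong_mat) auto
  then show ?thesis
    by (simp add: det_div_Vdm_eq_det_divided_differences[OF distinct])
qed

lemma det_div_Vdm_has_limit:
  fixes F :: "nat \<Rightarrow> complex \<Rightarrow> 'q::t2_space \<Rightarrow> complex"
  assumes holo: "\<And>j q. (\<lambda>w. F j w q) holomorphic_on UNIV"
    and cont: "\<And>j. continuous_on UNIV (\<lambda>(w, q). F j w q)"
  shows "\<exists>L. ((\<lambda>(a, q). det (mat n n (\<lambda>(i, j). F j (a i) q)) / Vdm n a) \<longlongrightarrow> L)
           (at (a0, q0) within {(a, q). \<forall>i<n. \<forall>j<n. i \<noteq> j \<longrightarrow> a i \<noteq> a j})"
proof -
  define R where "R = 1 + (\<Sum>i<n. norm (a0 i))"
  define U where "U = {x :: (nat \<Rightarrow> complex) \<times> 'q. \<forall>b<n. norm (fst x b) < R}"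
  define D where "D x = (\<Prod>m<n. (-1::complex) ^ m)
      * det (mat n n (\<lambda>(m, j). hermite_integral R m (fst x) (\<lambda>w. F j w (snd x))))" for x
  let ?S = "{(a, q). \<forall>i<n. \<forall>j<n. i \<noteq> j \<longrightarrow> a i \<noteq> a j}"
  have "U = (\<Inter>b<n. {x. norm (fst x b) < R})"
    unfolding U_def by auto
  moreover have coord: "continuous_on UNIV (\<lambda>x :: (nat \<Rightarrow> complex) \<times> 'q. fst x b)" for b
    by (rule continuous_on_product_then_coordinatewise, intro continuous_intros)
  ultimately have "open U"
    by (auto intro!: open_INT open_Collect_less continuous_intros coord)
  moreover have "(a0, q0) \<in> U"
    unfolding U_def R_def
    by (auto intro!: le_less_trans[OF member_le_sum[of _ "{..<n}" "\<lambda>i. norm (a0 i)"]])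
  moreover have "continuous_on U D"
  proof -
    have "0 \<le> R" unfolding R_def by (simp add: add_nonneg_nonneg sum_nonneg)
    have "continuous_on U (\<lambda>x. hermite_integral R m (fst x) (\<lambda>w. F j w (snd x)))" if "m < n" for j m
      using continuous_on_hermite_integral[OF cont \<open>0 \<le> R\<close>, of m]
      by (rule continuous_on_subset) (use that in \<open>auto simp: U_def\<close>)
    then show ?thesis
      unfolding continuous_on_def D_def by (intro ballI tendsto_intros tendsto_det_mat) auto
  qed
  ultimately have "(D \<longlongrightarrow> D (a0, q0)) (at (a0, q0) within ?S)"
    using continuous_on_eq_continuous_at continuous_at_imp_continuous_at_within continuous_within
    by blast
  moreover have "\<forall>\<^sub>F x in at (a0, q0) within ?S.
      D x = (\<lambda>(a, q). det (mat n n (\<lambda>(i, j). F j (a i) q)) / Vdm n a) x"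
  proof -
    have "\<forall>\<^sub>F x in at (a0, q0) within ?S. x \<in> U \<and> x \<in> ?S"
      using eventually_nhds_in_open[OF \<open>open U\<close> \<open>(a0, q0) \<in> U\<close>]
      by (auto simp: eventually_at_filter elim: eventually_mono)
    then show ?thesis
    proof eventually_elim
      case (elim x)
      obtain a q where x: "x = (a, q)" by fastforce
      from elim have "\<forall>i<n. \<forall>j<n. i \<noteq> j \<longrightarrow> a i \<noteq> a j" "\<forall>b<n. norm (a b) < R"
        unfolding U_def x by auto
      from det_div_Vdm_eq_det_hermite_integrals[of "\<lambda>j w. F j w q", OF holo this]
      show ?case unfolding D_def x by simp
    qed
  qed
  ultimately show ?thesis
    using Lim_transform_eventually by blast
qed

section \<open>Existence of the analytic extensions\<close>

lemma tendsto_apply: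
  fixes f :: "'x \<Rightarrow> nat \<Rightarrow> 'b::metric_space"
  assumes "(f \<longlongrightarrow> a) F"
  shows "((\<lambda>x. f x i) \<longlongrightarrow> a i) F"
proof -
  have "continuous_on UNIV (\<lambda>y :: nat \<Rightarrow> 'b. y i)"
    by (rule continuous_on_product_coordinates)
  then have "isCont (\<lambda>y. y i) a"
    using continuous_on_eq_continuous_at[OF open_UNIV] by blast
  from isCont_tendsto_compose[OF this assms] show ?thesis .
qed

text \<open>The entries of the matrix in \<open>Bp_raw\<close> with row \<open>i\<close> multiplied by \<open>\<Prod>\<^sub>j (a\<^sub>i - b\<^sub>j)\<close>:
  they are entire in \<open>a\<^sub>i\<close>.\<close>

definition cleared_entry :: "nat \<Rightarrow> (nat \<Rightarrow> real) \<Rightarrow> complex \<Rightarrow> nat \<Rightarrow> complex \<Rightarrow> (nat \<Rightarrow> complex) \<Rightarrow> complex" where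
  "cleared_entry k l p j w b =
     (if j < k then exp (p * (w - b j)) * (\<Prod>j'\<in>{..<k}-{j}. w - b j')
      else (\<Prod>j'<k. w - b j') * exp (w * complex_of_real (l (j - k))))"

lemma cleared_entry_holomorphic: "(\<lambda>w. cleared_entry k l p j w b) holomorphic_on UNIV"
  by (cases "j < k") (auto simp: cleared_entry_def intro!: holomorphic_intros)

lemma cleared_entry_continuous: "continuous_on UNIV (\<lambda>(w, b). cleared_entry k l p j w b)"
proof -
  have coord: "continuous_on UNIV (\<lambda>x :: complex \<times> (nat \<Rightarrow> complex). snd x j)" for j
    by (rule continuous_on_product_then_coordinatewise) (intro continuous_intros)
  show ?thesis
    by (cases "j < k") (auto simp: cleared_entry_def case_prod_unfold intro!: continuous_intros coord)
qed

lemma cleared_entry_eq: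
  assumes "\<forall>j'<k. w \<noteq> b j'"
  shows "cleared_entry k l p j w b = (\<Prod>j'<k. w - b j')
     * (if j < k then exp (p * (w - b j)) / (w - b j) else exp (w * complex_of_real (l (j - k))))"
proof (cases "j < k")
  case True
  then have "(\<Prod>j'<k. w - b j') = (w - b j) * (\<Prod>j'\<in>{..<k}-{j}. w - b j')"
    by (subst prod.remove[of _ j]) auto
  with True assms show ?thesis by (simp add: cleared_entry_def)
qed (simp add: cleared_entry_def)

lemma Bp_raw_eq_det_cleared_div_Vdm:
  assumes "\<forall>i<N+k. \<forall>j<k. a i \<noteq> b j"
  shows "Bp_raw N k l p a b = (-1) ^ (N * k) / Vdm k (\<lambda>j. - b j)
     * (det (mat (N+k) (N+k) (\<lambda>(i, j). cleared_entry k l p j (a i) b)) / Vdm (N+k) a)"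
proof -
  define M where "M i j = (if j < k then exp (p * (a i - b j)) / (a i - b j)
    else exp (a i * complex_of_real (l (j - k))))" for i j
  have "mat (N+k) (N+k) (\<lambda>(i, j). cleared_entry k l p j (a i) b)
      = mat (N+k) (N+k) (\<lambda>(i, j). (\<Prod>j'<k. a i - b j') * 1 * M i j)"
    by (rule cong_mat) (use assms in \<open>auto simp: cleared_entry_eq M_def\<close>)
  then have "det (mat (N+k) (N+k) (\<lambda>(i, j). cleared_entry k l p j (a i) b))
      = Dprod (N+k) k a (\<lambda>j. - b j) * det (mat (N+k) (N+k) (\<lambda>(i, j). M i j))"
    using det_mat_scale_rows_cols[of "N+k" "\<lambda>i. \<Prod>j'<k. a i - b j'" "\<lambda>_. 1" M]
    by (simp add: Dprod_def)
  then show ?thesis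
    unfolding Bp_raw_def M_def by (simp add: field_simps)
qed

lemma Bp_raw_has_limit:
  assumes "\<forall>i<k. \<forall>j<k. i \<noteq> j \<longrightarrow> b0 i \<noteq> b0 j"
  shows "\<exists>L. ((\<lambda>(a, b). Bp_raw N k l p a b) \<longlongrightarrow> L) (at (a0, b0) within generic_pair (N+k) k)"
proof -
  let ?G = "generic_pair (N+k) k"
  obtain L where "((\<lambda>(a, b). det (mat (N+k) (N+k) (\<lambda>(i, j). cleared_entry k l p j (a i) b)) / Vdm (N+k) a)
      \<longlongrightarrow> L) (at (a0, b0) within {(a, b). \<forall>i<N+k. \<forall>j<N+k. i \<noteq> j \<longrightarrow> a i \<noteq> a j})"
    using det_div_Vdm_has_limit[where F = "\<lambda>j w b. cleared_entry k l p j w b",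
        OF cleared_entry_holomorphic cleared_entry_continuous] by blast
  then have det_lim: "((\<lambda>(a, b). det (mat (N+k) (N+k) (\<lambda>(i, j). cleared_entry k l p j (a i) b)) / Vdm (N+k) a)
      \<longlongrightarrow> L) (at (a0, b0) within ?G)"
    by (rule tendsto_within_subset) (auto simp: generic_pair_def generic_pts_def)
  have "((\<lambda>x. snd x) \<longlongrightarrow> b0) (at (a0, b0) within ?G)"
    using tendsto_snd[OF tendsto_ident_at[of "(a0, b0)" ?G]] by simp
  then have "((\<lambda>x. snd x j) \<longlongrightarrow> b0 j) (at (a0, b0) within ?G)" for j
    by (rule tendsto_apply)
  then have "((\<lambda>x. Vdm k (\<lambda>j. - snd x j)) \<longlongrightarrow> Vdm k (\<lambda>j. - b0 j)) (at (a0, b0) within ?G)"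
    unfolding Vdm_def by (intro tendsto_intros)
  moreover have "Vdm k (\<lambda>j. - b0 j) \<noteq> 0"
    using assms by (intro Vdm_nonzero) auto
  ultimately have "((\<lambda>(a, b). (-1) ^ (N * k) / Vdm k (\<lambda>j. - b j)
      * (det (mat (N+k) (N+k) (\<lambda>(i, j). cleared_entry k l p j (a i) b)) / Vdm (N+k) a))
      \<longlongrightarrow> (-1) ^ (N * k) / Vdm k (\<lambda>j. - b0 j) * L) (at (a0, b0) within ?G)"
    using det_lim unfolding case_prod_unfold by (intro tendsto_intros) auto
  moreover have "\<forall>\<^sub>F x in at (a0, b0) within ?G. (\<lambda>(a, b). (-1) ^ (N * k) / Vdm k (\<lambda>j. - b j)
      * (det (mat (N+k) (N+k) (\<lambda>(i, j). cleared_entry k l p j (a i) b)) / Vdm (N+k) a))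
      x = (\<lambda>(a, b). Bp_raw N k l p a b) x"
    unfolding eventually_at_filter
    by (rule always_eventually) (auto simp: generic_pair_def Bp_raw_eq_det_cleared_div_Vdm)
  ultimately show ?thesis
    using Lim_transform_eventually by blast
qed

lemma Bp_raw_0: "Bp_raw N 0 l p a b = B_raw N l a"
  by (simp add: Bp_raw_def B_raw_def Dprod_def Vdm_def)

lemma B_raw_has_limit: "\<exists>L. (B_raw N l \<longlongrightarrow> L) (at a0 within generic_pts N)"
proof -
  obtain L where L: "((\<lambda>(a, b). Bp_raw N 0 l 0 a b) \<longlongrightarrow> L) (at (a0, \<lambda>_. 0) within generic_pair N 0)"
    using Bp_raw_has_limit[of 0 "\<lambda>_. 0" N l 0 a0] by auto
  have "filterlim (\<lambda>a. (a, \<lambda>_. 0)) (at (a0, \<lambda>_. 0) within generic_pair N 0) (at a0 within generic_pts N)"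
    unfolding filterlim_at
    by (auto simp: eventually_at_filter generic_pair_def generic_pts_def intro!: tendsto_intros)
  from filterlim_compose[OF L this] show ?thesis
    by (auto simp: Bp_raw_0)
qed

section \<open>The Schur complement at distinct nodes\<close>

lemma det_four_block_mat_Schur:
  fixes P :: "'a::field mat"
  assumes P: "P \<in> carrier_mat k k" and Q: "Q \<in> carrier_mat k n" and R: "R \<in> carrier_mat n k"
    and A: "A \<in> carrier_mat n n" and Ai: "Ai \<in> carrier_mat n n" and inv: "A * Ai = 1\<^sub>m n"
  shows "det (four_block_mat P Q R A) = det A * det (P - Q * (Ai * R))"
proof -
  define E where "E = four_block_mat (1\<^sub>m k) (0\<^sub>m k n) (- (Ai * R)) (1\<^sub>m n)"
  have AiR: "Ai * R \<in> carrier_mat n k" and mAiR: "- (Ai * R) \<in> carrier_mat n k"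
    using Ai R by auto
  have E: "E \<in> carrier_mat (k+n) (k+n)" and "det E = 1"
    unfolding E_def using mAiR
    by (auto simp: det_four_block_mat_upper_right_zero[of _ k _ n])
  have "Q * - (Ai * R) = - (Q * (Ai * R))"
    by (rule uminus_mult_right_mat) (use Q AiR in auto)
  then have upper: "P + Q * - (Ai * R) = P - Q * (Ai * R)"
    using P Q AiR by (simp add: add_uminus_minus_mat[of _ k k])
  have "A * - (Ai * R) = - (A * (Ai * R))"
    by (rule uminus_mult_right_mat) (use A AiR in auto)
  also have "A * (Ai * R) = R"
    using A Ai R inv by (simp add: assoc_mult_mat[symmetric])
  finally have "A * - (Ai * R) = - R" .
  then have lower: "R + A * - (Ai * R) = 0\<^sub>m n k"
    using R by (auto intro!: eq_matI)
  have "four_block_mat P Q R A * E = four_block_mat (P * 1\<^sub>m k + Q * - (Ai * R)) (P * 0\<^sub>m k n + Q * 1\<^sub>m n)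
       (R * 1\<^sub>m k + A * - (Ai * R)) (R * 0\<^sub>m k n + A * 1\<^sub>m n)"
    unfolding E_def by (rule mult_four_block_mat[OF P Q R A]) (use mAiR in auto)
  then have "four_block_mat P Q R A * E = four_block_mat (P - Q * (Ai * R)) Q (0\<^sub>m n k) A"
    using P Q R A by (simp add: upper lower)
  then have "det (four_block_mat P Q R A) = det (four_block_mat (P - Q * (Ai * R)) Q (0\<^sub>m n k) A)"
    using det_mult[OF _ E, of "four_block_mat P Q R A"] P Q R A \<open>det E = 1\<close> by simp
  also have "\<dots> = det (P - Q * (Ai * R)) * det A"
    using P Q AiR A by (intro det_four_block_mat_lower_left_zero) (auto intro!: minus_carrier_mat)
  finally show ?thesis by simp
qed

lemma mat_inverse_exists:
  fixes A :: "'a::field mat"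
  assumes A: "A \<in> carrier_mat n n" and "det A \<noteq> 0"
  obtains Ai where "mat_inverse A = Some Ai" "A * Ai = 1\<^sub>m n" "Ai \<in> carrier_mat n n"
proof -
  have "A \<in> Units (ring_mat TYPE('a) n ())"
    using det_non_zero_imp_unit[OF A \<open>det A \<noteq> 0\<close>] .
  then obtain Ai where "mat_inverse A = Some Ai"
    using mat_inverse(1)[OF A] by fastforce
  with mat_inverse(2)[OF A this] that show ?thesis by blast
qed

text \<open>The Schur complement of \<open>A_mat N l z\<close> in the matrix of \<open>Bp_raw N k l p (u, z) v\<close>
  has entries \<open>schur_kernel N l p z (A_mat N l z)\<^sup>-\<^sup>1 u\<^sub>i v\<^sub>j\<close>.\<close>

definition schur_kernel :: "nat \<Rightarrow> (nat \<Rightarrow> real) \<Rightarrow> complex \<Rightarrow> (nat \<Rightarrow> complex) \<Rightarrow> complex mat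
    \<Rightarrow> complex \<Rightarrow> complex \<Rightarrow> complex" where
  "schur_kernel N l p z Ai x y = exp (p * (x - y)) / (x - y)
     - vec N (\<lambda>j. exp (x * complex_of_real (l j))) \<bullet> (Ai *\<^sub>v vec N (\<lambda>m. exp (p * (z m - y)) / (z m - y)))"

lemma det_Bp_matrix_concat:
  assumes Ai: "Ai \<in> carrier_mat N N" and inv: "A_mat N l z * Ai = 1\<^sub>m N"
  shows "det (mat (N+k) (N+k) (\<lambda>(i, j).
          if j < k then exp (p * (concat_vec k u z i - v j)) / (concat_vec k u z i - v j)
          else exp (concat_vec k u z i * complex_of_real (l (j - k)))))
    = det (A_mat N l z) * det (mat k k (\<lambda>(i, j). schur_kernel N l p z Ai (u i) (v j)))"
proof -
  define P where "P = mat k k (\<lambda>(i, j). exp (p * (u i - v j)) / (u i - v j))"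
  define Q where "Q = mat k N (\<lambda>(i, j). exp (u i * complex_of_real (l j)))"
  define R where "R = mat N k (\<lambda>(m, j). exp (p * (z m - v j)) / (z m - v j))"
  have carrier: "P \<in> carrier_mat k k" "Q \<in> carrier_mat k N" "R \<in> carrier_mat N k"
    "A_mat N l z \<in> carrier_mat N N"
    unfolding P_def Q_def R_def A_mat_def by auto
  have "mat (N+k) (N+k) (\<lambda>(i, j).
          if j < k then exp (p * (concat_vec k u z i - v j)) / (concat_vec k u z i - v j)
          else exp (concat_vec k u z i * complex_of_real (l (j - k)))) = four_block_mat P Q R (A_mat N l z)"
    by (rule eq_matI) (auto simp: P_def Q_def R_def A_mat_def concat_vec_def)
  moreover have "P - Q * (Ai * R) = mat k k (\<lambda>(i, j). schur_kernel N l p z Ai (u i) (v j))"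
  proof (rule eq_matI)
    fix i j assume "i < dim_row (mat k k (\<lambda>(i, j). schur_kernel N l p z Ai (u i) (v j)))"
      "j < dim_col (mat k k (\<lambda>(i, j). schur_kernel N l p z Ai (u i) (v j)))"
    then have i: "i < k" and j: "j < k" by auto
    have "row Q i = vec N (\<lambda>j. exp (u i * complex_of_real (l j)))"
      using i unfolding Q_def by (intro eq_vecI) auto
    moreover have "col R j = vec N (\<lambda>m. exp (p * (z m - v j)) / (z m - v j))"
      using j unfolding R_def by (intro eq_vecI) auto
    ultimately have "(Q * (Ai * R)) $$ (i, j) = vec N (\<lambda>j. exp (u i * complex_of_real (l j)))
        \<bullet> (Ai *\<^sub>v vec N (\<lambda>m. exp (p * (z m - v j)) / (z m - v j)))"
      using i j carrier Ai by (simp add: col_mult2[OF Ai carrier(3) j])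
    then show "(P - Q * (Ai * R)) $$ (i, j) = mat k k (\<lambda>(i, j). schur_kernel N l p z Ai (u i) (v j)) $$ (i, j)"
      using i j carrier Ai by (simp add: P_def schur_kernel_def)
  qed (use carrier Ai in auto)
  ultimately show ?thesis
    using det_four_block_mat_Schur[OF carrier Ai inv] by simp
qed

lemma prod_lessThan_add: "(\<Prod>i<k + (n::nat). f i) = (\<Prod>i<k. f i) * (\<Prod>m<n. f (k + m))"
  by (induction n) (auto simp: algebra_simps)

lemma prod_greaterThanLessThan_add:
  "i < k \<Longrightarrow> (\<Prod>j\<in>{i<..<k + (n::nat)}. f j) = (\<Prod>j\<in>{i<..<k}. f j) * (\<Prod>m<n. f (k + m))"
proof (induction n)
  case (Suc n)
  then have "{i<..<k + Suc n} = insert (k + n) {i<..<k + n}" by auto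
  with Suc show ?case by (simp add: algebra_simps)
qed simp

lemma prod_greaterThanLessThan_shift:
  "(\<Prod>j\<in>{k + m<..<k + (n::nat)}. f j) = (\<Prod>j\<in>{m<..<n}. f (k + j))"
proof -
  have "{k + m<..<k + n} = (+) k ` {m<..<n}"
  proof (intro equalityI subsetI)
    fix x assume "x \<in> {k + m<..<k + n}"
    then have "x = k + (x - k)" "x - k \<in> {m<..<n}" by auto
    then show "x \<in> (+) k ` {m<..<n}" by (rule image_eqI)
  qed auto
  then show ?thesis by (simp add: prod.reindex)
qed

lemma Dprod_concat:
  "Dprod (N + k) k (concat_vec k u z) (\<lambda>j. - v j)
     = Dprod k k u (\<lambda>j. - v j) * (\<Prod>m<N. \<Prod>j<k. z m - v j)"
  unfolding Dprod_def by (subst add.commute) (simp add: prod_lessThan_add concat_vec_def)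

lemma Vdm_concat:
  "Vdm (N + k) (concat_vec k u z) = Vdm k u * (\<Prod>i<k. \<Prod>m<N. u i - z m) * Vdm N z"
proof -
  let ?w = "concat_vec k u z"
  have "Vdm (N + k) ?w = (\<Prod>i<k + N. \<Prod>j\<in>{i<..<k + N}. ?w i - ?w j)"
    unfolding Vdm_def by (simp add: add.commute)
  also have "\<dots> = (\<Prod>i<k. \<Prod>j\<in>{i<..<k + N}. ?w i - ?w j) * (\<Prod>m<N. \<Prod>j\<in>{k + m<..<k + N}. ?w (k + m) - ?w j)"
    by (rule prod_lessThan_add)
  also have "(\<Prod>i<k. \<Prod>j\<in>{i<..<k + N}. ?w i - ?w j) = (\<Prod>i<k. (\<Prod>j\<in>{i<..<k}. u i - u j) * (\<Prod>m<N. u i - z m))"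
    by (intro prod.cong refl) (simp add: prod_greaterThanLessThan_add concat_vec_def)
  also have "(\<Prod>m<N. \<Prod>j\<in>{k + m<..<k + N}. ?w (k + m) - ?w j) = (\<Prod>m<N. \<Prod>j\<in>{m<..<N}. z m - z j)"
    by (simp add: prod_greaterThanLessThan_shift concat_vec_def)
  finally show ?thesis unfolding Vdm_def by (simp add: prod.distrib algebra_simps)
qed

lemma B_raw_eq: "B_raw N l z = det (A_mat N l z) / Vdm N z"
  unfolding B_raw_def A_mat_def ..

lemma Bp_raw_concat_eq:
  assumes "Ai \<in> carrier_mat N N" and "A_mat N l z * Ai = 1\<^sub>m N"
  shows "Bp_raw N k l p (concat_vec k u z) v
    = (-1) ^ (N * k) * (Dprod k k u (\<lambda>j. - v j) * (\<Prod>m<N. \<Prod>j<k. z m - v j))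
      / (Vdm k u * (\<Prod>i<k. \<Prod>m<N. u i - z m) * Vdm N z * Vdm k (\<lambda>j. - v j))
      * (det (A_mat N l z) * det (mat k k (\<lambda>(i, j). schur_kernel N l p z Ai (u i) (v j))))"
  unfolding Bp_raw_def Dprod_concat Vdm_concat det_Bp_matrix_concat[OF assms]
  by (simp add: mult.assoc)

lemma Bp_raw_single_concat_eq:
  assumes "Ai \<in> carrier_mat N N" and "A_mat N l z * Ai = 1\<^sub>m N"
  shows "Bp_raw N 1 l p (concat_vec 1 (\<lambda>_. x) z) (\<lambda>_. y)
    = (-1) ^ N * ((x - y) * (\<Prod>m<N. z m - y)) / ((\<Prod>m<N. x - z m) * Vdm N z)
      * (det (A_mat N l z) * schur_kernel N l p z Ai x y)"
  using Bp_raw_concat_eq[OF assms, of 1 p "\<lambda>_. x" "\<lambda>_. y"]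
  by (simp add: Dprod_def Vdm_def det_single)

lemma schur_kernel_eq:
  assumes "Ai \<in> carrier_mat N N"
  shows "schur_kernel N l p z Ai x y = exp (p * (x - y)) / (x - y)
     + vec N (\<lambda>j. exp (complex_of_real (l j) * x)) \<bullet> (Ai *\<^sub>v vec N (\<lambda>i. exp (p * (z i - y)) / (y - z i)))"
proof -
  have "vec N (\<lambda>i. exp (p * (z i - y)) / (y - z i)) = - vec N (\<lambda>i. exp (p * (z i - y)) / (z i - y))"
    by (intro eq_vecI) (auto simp: minus_divide_right)
  then show ?thesis
    using assms
    by (simp add: schur_kernel_def mult.commute scalar_prod_def mult_mat_vec_def
        sum_negf[symmetric] sum_distrib_left)
qed

lemma prod_lessThan_diff_swap:
  "(\<Prod>m<N. y - z m) = (-1) ^ N * (\<Prod>m<N. z m - (y :: 'a :: comm_ring_1))"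
  by (induction N) (auto simp: algebra_simps)

lemma Bp_raw_single_ratio:
  assumes distinct: "\<forall>i<N. \<forall>j<N. i \<noteq> j \<longrightarrow> z i \<noteq> z j"
    and Ai: "Ai \<in> carrier_mat N N" "A_mat N l z * Ai = 1\<^sub>m N"
    and x: "\<forall>m<N. x \<noteq> z m"
  shows "Bp_raw N 1 l p (concat_vec 1 (\<lambda>_. x) z) (\<lambda>_. y) / B_raw N l z
    = (x - y) * (\<Prod>m<N. (y - z m) / (x - z m)) * schur_kernel N l p z Ai x y"
proof -
  have "det (A_mat N l z) \<noteq> 0"
    using Ai det_mult[of "A_mat N l z" N Ai] by (auto simp: A_mat_def)
  moreover have "Vdm N z \<noteq> 0" "(\<Prod>m<N. x - z m) \<noteq> 0"
    using Vdm_nonzero[OF distinct] x by (auto simp: prod_zero_iff)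
  ultimately show ?thesis
    unfolding Bp_raw_single_concat_eq[OF Ai] B_raw_eq
    by (simp add: prod_dividef field_simps prod_lessThan_diff_swap[where y = y])
qed

lemma Bp_raw_ratio_eq_det_single_ratios:
  assumes distinct: "\<forall>i<N. \<forall>j<N. i \<noteq> j \<longrightarrow> z i \<noteq> z j"
    and B_nz: "B_raw N l z \<noteq> 0"
    and uz: "\<forall>i<k. \<forall>m<N. u i \<noteq> z m" and uv: "\<forall>i<k. \<forall>j<k. u i \<noteq> v j"
  shows "Bp_raw N k l p (concat_vec k u z) v / B_raw N l z
    = Dprod k k u (\<lambda>j. - v j) / (Vdm k u * Vdm k (\<lambda>j. - v j))
      * det (mat k k (\<lambda>(i, j). 1 / (u i - v j)
          * (Bp_raw N 1 l p (concat_vec 1 (\<lambda>_. u i) z) (\<lambda>_. v j) / B_raw N l z)))"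
proof -
  define Y where "Y i = (\<Prod>m<N. u i - z m)" for i
  define X where "X j = (\<Prod>m<N. v j - z m)" for j
  have det_A: "det (A_mat N l z) \<noteq> 0"
    using B_nz by (auto simp: B_raw_eq)
  then obtain Ai where Ai: "Ai \<in> carrier_mat N N" "A_mat N l z * Ai = 1\<^sub>m N"
    by (rule mat_inverse_exists[of _ N, rotated]) (auto simp: A_mat_def)
  define S where "S = mat k k (\<lambda>(i, j). schur_kernel N l p z Ai (u i) (v j))"
  have nonzero: "Vdm N z \<noteq> 0" "(\<Prod>i<k. Y i) \<noteq> 0"
    using Vdm_nonzero[OF distinct] uz by (auto simp: Y_def prod_zero_iff)
  have X: "(\<Prod>j<k. X j) = (-1) ^ (N * k) * (\<Prod>m<N. \<Prod>j<k. z m - v j)"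
  proof -
    have "X j = (-1) ^ N * (\<Prod>m<N. z m - v j)" for j
      unfolding X_def by (rule prod_lessThan_diff_swap)
    then show ?thesis
      by (simp add: prod.distrib power_mult prod.swap[of _ "{..<N}"])
  qed
  have det_entries: "det (mat k k (\<lambda>(i, j). 1 / (u i - v j)
          * (Bp_raw N 1 l p (concat_vec 1 (\<lambda>_. u i) z) (\<lambda>_. v j) / B_raw N l z)))
      = (\<Prod>i<k. 1 / Y i) * (\<Prod>j<k. X j) * det S"
  proof -
    have "1 / (u i - v j) * (Bp_raw N 1 l p (concat_vec 1 (\<lambda>_. u i) z) (\<lambda>_. v j) / B_raw N l z)
        = 1 / Y i * X j * schur_kernel N l p z Ai (u i) (v j)" if "i < k" "j < k" for i j
    proof -
      have "u i \<noteq> v j" "\<forall>m<N. u i \<noteq> z m"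
        using uv uz that by auto
      with Bp_raw_single_ratio[OF distinct Ai this(2), of p "v j"] show ?thesis
        by (simp add: X_def Y_def prod_dividef)
    qed
    then have "mat k k (\<lambda>(i, j). 1 / (u i - v j)
          * (Bp_raw N 1 l p (concat_vec 1 (\<lambda>_. u i) z) (\<lambda>_. v j) / B_raw N l z))
        = mat k k (\<lambda>(i, j). 1 / Y i * X j * schur_kernel N l p z Ai (u i) (v j))"
      by (intro cong_mat) auto
    then show ?thesis
      unfolding S_def
      using det_mat_scale_rows_cols[of k "\<lambda>i. 1 / Y i" X "\<lambda>i j. schur_kernel N l p z Ai (u i) (v j)"]
      by simp
  qed
  show ?thesis
    unfolding det_entries
    unfolding Bp_raw_concat_eq[OF Ai, of k p u v] B_raw_eq S_def Y_def[symmetric]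
    using det_A nonzero X by (simp add: prod_dividef field_simps)
qed

section \<open>Passing to the extensions\<close>

lemma Bp_raw_trunc: "Bp_raw N k l p (trunc_vec (N + k) a) (trunc_vec k b) = Bp_raw N k l p a b"
proof -
  have "mat (N + k) (N + k) (\<lambda>(i, j).
          if j < k then exp (p * (trunc_vec (N + k) a i - trunc_vec k b j)) / (trunc_vec (N + k) a i - trunc_vec k b j)
          else exp (trunc_vec (N + k) a i * complex_of_real (l (j - k))))
      = mat (N + k) (N + k) (\<lambda>(i, j).
          if j < k then exp (p * (a i - b j)) / (a i - b j) else exp (a i * complex_of_real (l (j - k))))"
    by (rule cong_mat) (auto simp: trunc_vec_def)
  then show ?thesis
    unfolding Bp_raw_def Dprod_def Vdm_def by (simp add: trunc_vec_def)
qed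

lemma B_raw_trunc: "B_raw N l (trunc_vec N a) = B_raw N l a"
  using Bp_raw_trunc[of N 0 l 0 a] by (simp add: Bp_raw_0)

lemma B_fun_eq_B_raw:
  assumes "\<forall>i<N. \<forall>j<N. i \<noteq> j \<longrightarrow> xi i \<noteq> xi j"
  shows "B_fun N l xi = B_raw N l xi"
proof -
  have "trunc_vec N xi \<in> generic_pts N"
    using assms by (auto simp: generic_pts_def trunc_vec_def)
  then show ?thesis
    unfolding B_fun_def by (simp add: B_raw_trunc)
qed

lemma concat_generic_pair:
  assumes "\<forall>i<N. \<forall>j<N. i \<noteq> j \<longrightarrow> z i \<noteq> z j"
    and "\<forall>i<k. \<forall>m<N. u i \<noteq> z m \<and> v i \<noteq> z m"
    and "\<forall>i<k. \<forall>j<k. i \<noteq> j \<longrightarrow> u i \<noteq> u j \<and> v i \<noteq> v j"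
    and "\<forall>i<k. \<forall>j<k. u i \<noteq> v j"
  shows "(trunc_vec (N + k) (concat_vec k u z), trunc_vec k v) \<in> generic_pair (N + k) k"
  using assms
  unfolding generic_pair_def generic_pts_def trunc_vec_def concat_vec_def
  by (auto dest: sym)

lemma Bp_fun_concat_eq_Bp_raw:
  assumes "\<forall>i<N. \<forall>j<N. i \<noteq> j \<longrightarrow> z i \<noteq> z j"
    and "\<forall>i<k. \<forall>m<N. u i \<noteq> z m \<and> v i \<noteq> z m"
    and "\<forall>i<k. \<forall>j<k. i \<noteq> j \<longrightarrow> u i \<noteq> u j \<and> v i \<noteq> v j"
    and "\<forall>i<k. \<forall>j<k. u i \<noteq> v j"
  shows "Bp_fun N k l p (concat_vec k u z) v = Bp_raw N k l p (concat_vec k u z) v"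
  using concat_generic_pair[OF assms] unfolding Bp_fun_def by (simp add: Bp_raw_trunc)

definition generic_avoiding :: "nat \<Rightarrow> complex set \<Rightarrow> (nat \<Rightarrow> complex) set" where
  "generic_avoiding N E = {z \<in> generic_pts N. \<forall>m<N. z m \<notin> E}"

lemma generic_avoidingD:
  assumes "z \<in> generic_avoiding N E"
  shows "\<forall>i<N. \<forall>j<N. i \<noteq> j \<longrightarrow> z i \<noteq> z j" "\<forall>i\<ge>N. z i = 0" "\<forall>e\<in>E. \<forall>m<N. e \<noteq> z m"
  using assms by (auto simp: generic_avoiding_def generic_pts_def)

lemma finite_bad_perturbations:
  assumes "finite E" and "N > 0"
  shows "finite {t :: real. trunc_vec N (\<lambda>m. xi m + of_real t * of_nat (Suc m))
      \<notin> generic_avoiding N E - {trunc_vec N xi}}"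
proof -
  \<comment> \<open>the parameters at which two perturbed nodes collide or one of them lies in \<open>E\<close>\<close>
  define Bad where "Bad = insert 0 (complex_of_real -`
     ((\<lambda>(m, m'). (xi m - xi m') / (of_nat m' - of_nat m)) ` ({..<N} \<times> {..<N})
      \<union> (\<lambda>(m, e). (e - xi m) / of_nat (Suc m)) ` ({..<N} \<times> E)))"
  have "trunc_vec N (\<lambda>m. xi m + of_real t * of_nat (Suc m)) \<in> generic_avoiding N E - {trunc_vec N xi}"
    if "t \<notin> Bad" for t
  proof -
    have "xi m + of_real t * of_nat (Suc m) \<noteq> xi m' + of_real t * of_nat (Suc m')"
      if "m < N" "m' < N" "m \<noteq> m'" for m m'
    proof
      assume "xi m + of_real t * of_nat (Suc m) = xi m' + of_real t * of_nat (Suc m')"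
      then have "of_real t = (xi m - xi m') / (of_nat m' - of_nat m)"
        using \<open>m \<noteq> m'\<close> by (simp add: field_simps)
      then show False using \<open>t \<notin> Bad\<close> that unfolding Bad_def by force
    qed
    moreover have "xi m + of_real t * of_nat (Suc m) \<notin> E" if "m < N" for m
    proof
      assume "xi m + of_real t * of_nat (Suc m) \<in> E"
      moreover have "of_real t = ((xi m + of_real t * of_nat (Suc m)) - xi m) / of_nat (Suc m)"
        by (simp del: of_nat_Suc)
      ultimately show False using \<open>t \<notin> Bad\<close> that unfolding Bad_def by force
    qed
    moreover have "xi 0 + of_real t * of_nat (Suc 0) \<noteq> xi 0"
      using \<open>t \<notin> Bad\<close> by (simp add: Bad_def)
    ultimately show ?thesis
      using \<open>N > 0\<close>
      by (auto simp: trunc_vec_def generic_avoiding_def generic_pts_def fun_eq_iff intro!: exI[of _ 0])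
  qed
  moreover have "finite Bad"
    unfolding Bad_def using \<open>finite E\<close>
    by (intro finite_insert[THEN iffD2] finite_vimageI) (auto simp: inj_on_def)
  ultimately show ?thesis
    by (auto intro: finite_subset[of _ Bad])
qed

lemma islimpt_generic_avoiding:
  assumes "finite E" and "N > 0"
  shows "trunc_vec N xi islimpt generic_avoiding N E"
proof -
  define zt where "zt t = trunc_vec N (\<lambda>m. xi m + of_real t * of_nat (Suc m))" for t :: real
  define Bad where "Bad = {t. zt t \<notin> generic_avoiding N E - {trunc_vec N xi}}"
  have "finite Bad"
    unfolding Bad_def zt_def using assms by (rule finite_bad_perturbations)
  have "\<exists>t. t \<in> {0<..<inverse (real (Suc n))} - Bad" for n
  proof -
    have "infinite ({0<..<inverse (real (Suc n))} - Bad)"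
      using \<open>finite Bad\<close> by (simp add: Diff_infinite_finite)
    then show ?thesis by (metis ex_in_conv finite.emptyI)
  qed
  then obtain tn where tn: "\<And>n. tn n \<in> {0<..<inverse (real (Suc n))} - Bad" by metis
  have "tn \<longlonglongrightarrow> 0"
    by (rule tendsto_sandwich[OF _ _ tendsto_const LIMSEQ_inverse_real_of_nat])
       (use tn in \<open>auto intro!: always_eventually less_imp_le\<close>)
  moreover have "continuous_on UNIV zt"
  proof (rule continuous_on_coordinatewise_then_product)
    fix i show "continuous_on UNIV (\<lambda>t. zt t i)"
      by (cases "i < N") (auto simp: zt_def trunc_vec_def intro!: continuous_intros)
  qed
  ultimately have "(\<lambda>n. zt (tn n)) \<longlonglongrightarrow> zt 0"
    by (intro continuous_on_tendsto_compose[of UNIV zt tn]) auto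
  moreover have "zt 0 = trunc_vec N xi" by (simp add: zt_def)
  ultimately show ?thesis
    using tn unfolding islimpt_sequential Bad_def by (intro exI[of _ "\<lambda>n. zt (tn n)"]) auto
qed

lemma tendsto_B_fun:
  assumes "trunc_vec N xi \<notin> generic_pts N" and "S \<subseteq> generic_pts N"
    and nontrivial: "at (trunc_vec N xi) within S \<noteq> bot"
  shows "(B_raw N l \<longlongrightarrow> B_fun N l xi) (at (trunc_vec N xi) within S)"
proof -
  obtain L where L: "(B_raw N l \<longlongrightarrow> L) (at (trunc_vec N xi) within generic_pts N)"
    using B_raw_has_limit by blast
  moreover have "at (trunc_vec N xi) within generic_pts N \<noteq> bot"
    using nontrivial \<open>S \<subseteq> generic_pts N\<close> by (metis at_le bot.extremum_uniqueI)
  ultimately have "B_fun N l xi = L"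
    unfolding B_fun_def using assms(1) tendsto_Lim by auto
  with tendsto_within_subset[OF L \<open>S \<subseteq> generic_pts N\<close>] show ?thesis by simp
qed

lemma tendsto_Bp_fun:
  assumes "(trunc_vec (N + k) a, trunc_vec k b) \<notin> generic_pair (N + k) k"
    and "at (trunc_vec (N + k) a, trunc_vec k b) within generic_pair (N + k) k \<noteq> bot"
    and "\<forall>i<k. \<forall>j<k. i \<noteq> j \<longrightarrow> b i \<noteq> b j"
  shows "((\<lambda>(a', b'). Bp_raw N k l p a' b') \<longlongrightarrow> Bp_fun N k l p a b)
      (at (trunc_vec (N + k) a, trunc_vec k b) within generic_pair (N + k) k)"
proof -
  have "\<forall>i<k. \<forall>j<k. i \<noteq> j \<longrightarrow> trunc_vec k b i \<noteq> trunc_vec k b j"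
    using assms(3) by (auto simp: trunc_vec_def)
  from Bp_raw_has_limit[OF this] obtain L where
    "((\<lambda>(a', b'). Bp_raw N k l p a' b') \<longlongrightarrow> L)
      (at (trunc_vec (N + k) a, trunc_vec k b) within generic_pair (N + k) k)"
    by blast
  with assms(1,2) show ?thesis
    unfolding Bp_fun_def by (simp add: tendsto_Lim)
qed

lemma concat_not_generic_pair:
  assumes "trunc_vec N xi \<notin> generic_pts N"
  shows "(trunc_vec (N + k) (concat_vec k u xi), trunc_vec k v) \<notin> generic_pair (N + k) k"
proof
  assume "(trunc_vec (N + k) (concat_vec k u xi), trunc_vec k v) \<in> generic_pair (N + k) k"
  then have "trunc_vec (N + k) (concat_vec k u xi) (k + i) \<noteq> trunc_vec (N + k) (concat_vec k u xi) (k + j)"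
    if "i < N" "j < N" "i \<noteq> j" for i j
    using that unfolding generic_pair_def generic_pts_def by auto
  then have "trunc_vec N xi \<in> generic_pts N"
    by (auto simp: generic_pts_def trunc_vec_def concat_vec_def)
  with assms show False by simp
qed

lemma continuous_on_trunc_concat: "continuous_on UNIV (\<lambda>z. trunc_vec (N + k) (concat_vec k u z))"
proof (rule continuous_on_coordinatewise_then_product)
  fix i show "continuous_on UNIV (\<lambda>z. trunc_vec (N + k) (concat_vec k u z) i)"
    by (cases "i < N + k"; cases "i < k") (auto simp: trunc_vec_def concat_vec_def)
qed

lemma tendsto_Bp_fun_concat:
  assumes nongeneric: "trunc_vec N xi \<notin> generic_pts N"
    and S: "S \<subseteq> generic_avoiding N (u ` {..<k} \<union> v ` {..<k})"
    and nontrivial: "at (trunc_vec N xi) within S \<noteq> bot"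
    and distinct: "\<forall>i<k. \<forall>j<k. i \<noteq> j \<longrightarrow> u i \<noteq> u j \<and> v i \<noteq> v j"
    and uv: "\<forall>i<k. \<forall>j<k. u i \<noteq> v j"
  shows "((\<lambda>z. Bp_raw N k l p (concat_vec k u z) v) \<longlongrightarrow> Bp_fun N k l p (concat_vec k u xi) v)
      (at (trunc_vec N xi) within S)"
proof -
  let ?x0 = "trunc_vec N xi" and ?G = "generic_pair (N + k) k"
  define g where "g z = (trunc_vec (N + k) (concat_vec k u z), trunc_vec k v)" for z
  have g_x0: "g ?x0 = (trunc_vec (N + k) (concat_vec k u xi), trunc_vec k v)"
    by (auto simp: g_def trunc_vec_def concat_vec_def fun_eq_iff)
  have "continuous_on UNIV g"
    unfolding g_def by (rule continuous_on_Pair[OF continuous_on_trunc_concat continuous_on_const])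
  then have "(g \<longlongrightarrow> g ?x0) (at ?x0 within S)"
    by (metis continuous_on_eq_continuous_at continuous_at_imp_continuous_at_within
        continuous_within open_UNIV UNIV_I)
  moreover have "g z \<in> ?G \<and> g z \<noteq> g ?x0" if "z \<in> S" "z \<noteq> ?x0" for z
  proof
    have z: "\<forall>i<N. \<forall>j<N. i \<noteq> j \<longrightarrow> z i \<noteq> z j" "\<forall>i\<ge>N. z i = 0"
      "\<forall>i<k. \<forall>m<N. u i \<noteq> z m \<and> v i \<noteq> z m"
      using generic_avoidingD[OF subsetD[OF S \<open>z \<in> S\<close>]] by auto
    then show "g z \<in> ?G"
      unfolding g_def using distinct uv by (intro concat_generic_pair) auto
    show "g z \<noteq> g ?x0"
    proof
      assume "g z = g ?x0"
      have "z m = xi m" if "m < N" for m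
      proof -
        have "fst (g z) (k + m) = fst (g ?x0) (k + m)"
          using \<open>g z = g ?x0\<close> by simp
        then show ?thesis
          using that by (simp add: g_def trunc_vec_def concat_vec_def)
      qed
      with z(2) \<open>z \<noteq> ?x0\<close> show False by (auto simp: trunc_vec_def)
    qed
  qed
  ultimately have lim_g: "filterlim g (at (g ?x0) within ?G) (at ?x0 within S)"
    unfolding filterlim_at by (auto simp: eventually_at_filter)
  have "at (g ?x0) within ?G \<noteq> bot"
  proof
    assume "at (g ?x0) within ?G = bot"
    with lim_g have "filtermap g (at ?x0 within S) = bot"
      by (simp add: filterlim_def bot_unique)
    with nontrivial show False by (simp add: filtermap_bot_iff)
  qed
  then have "((\<lambda>(a, b). Bp_raw N k l p a b) \<longlongrightarrow> Bp_fun N k l p (concat_vec k u xi) v) (at (g ?x0) within ?G)"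
    unfolding g_x0 using concat_not_generic_pair[OF nongeneric] distinct by (intro tendsto_Bp_fun) auto
  from filterlim_compose[OF this lim_g] show ?thesis
    by (simp add: g_def Bp_raw_trunc)
qed

lemma tendsto_Bp_fun_ratio:
  assumes nongeneric: "trunc_vec N xi \<notin> generic_pts N"
    and S: "S \<subseteq> generic_avoiding N (u ` {..<k} \<union> v ` {..<k})"
    and nontrivial: "at (trunc_vec N xi) within S \<noteq> bot" and B_nz: "B_fun N l xi \<noteq> 0"
    and distinct: "\<forall>i<k. \<forall>j<k. i \<noteq> j \<longrightarrow> u i \<noteq> u j \<and> v i \<noteq> v j"
    and uv: "\<forall>i<k. \<forall>j<k. u i \<noteq> v j"
  shows "((\<lambda>z. Bp_raw N k l p (concat_vec k u z) v / B_raw N l z)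
      \<longlongrightarrow> Bp_fun N k l p (concat_vec k u xi) v / B_fun N l xi) (at (trunc_vec N xi) within S)"
proof -
  have "S \<subseteq> generic_pts N"
    using S by (auto simp: generic_avoiding_def)
  with tendsto_B_fun[OF nongeneric _ nontrivial] tendsto_Bp_fun_concat[OF assms(1-3) distinct uv] B_nz
  show ?thesis by (intro tendsto_divide) auto
qed

lemma Bp_fun_ratio_eq_det_nongeneric:
  assumes nongeneric: "trunc_vec N xi \<notin> generic_pts N" and B_nz: "B_fun N l xi \<noteq> 0"
    and distinct: "\<forall>i<k. \<forall>j<k. i \<noteq> j \<longrightarrow> u i \<noteq> u j \<and> v i \<noteq> v j"
    and uv: "\<forall>i<k. \<forall>j<k. u i \<noteq> v j"
  shows "Bp_fun N k l p (concat_vec k u xi) v / B_fun N l xi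
    = Dprod k k u (\<lambda>j. - v j) / (Vdm k u * Vdm k (\<lambda>j. - v j))
      * det (mat k k (\<lambda>(i, j). 1 / (u i - v j)
          * (Bp_fun N 1 l p (concat_vec 1 (\<lambda>_. u i) xi) (\<lambda>_. v j) / B_fun N l xi)))"
proof -
  let ?x0 = "trunc_vec N xi" and ?c = "Dprod k k u (\<lambda>j. - v j) / (Vdm k u * Vdm k (\<lambda>j. - v j))"
  define S where "S = generic_avoiding N (u ` {..<k} \<union> v ` {..<k})"
  have "N > 0"
    using nongeneric by (cases N) (auto simp: generic_pts_def trunc_vec_def)
  then have nontrivial: "at ?x0 within S \<noteq> bot"
    using islimpt_generic_avoiding[of "u ` {..<k} \<union> v ` {..<k}" N xi]
    by (simp add: S_def trivial_limit_within)
  have LB: "(B_raw N l \<longlongrightarrow> B_fun N l xi) (at ?x0 within S)"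
    using nongeneric nontrivial by (intro tendsto_B_fun) (auto simp: S_def generic_avoiding_def)
  have lhs: "((\<lambda>z. Bp_raw N k l p (concat_vec k u z) v / B_raw N l z)
      \<longlongrightarrow> Bp_fun N k l p (concat_vec k u xi) v / B_fun N l xi) (at ?x0 within S)"
    by (rule tendsto_Bp_fun_ratio[OF nongeneric _ nontrivial B_nz distinct uv]) (simp add: S_def)
  have entries: "((\<lambda>z. 1 / (u i - v j) * (Bp_raw N 1 l p (concat_vec 1 (\<lambda>_. u i) z) (\<lambda>_. v j) / B_raw N l z))
      \<longlongrightarrow> 1 / (u i - v j) * (Bp_fun N 1 l p (concat_vec 1 (\<lambda>_. u i) xi) (\<lambda>_. v j) / B_fun N l xi))
      (at ?x0 within S)" if "i < k" "j < k" for i j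
  proof -
    have "S \<subseteq> generic_avoiding N ((\<lambda>_. u i) ` {..<1} \<union> (\<lambda>_. v j) ` {..<1})"
      using that by (auto simp: S_def generic_avoiding_def)
    then have "((\<lambda>z. Bp_raw N 1 l p (concat_vec 1 (\<lambda>_. u i) z) (\<lambda>_. v j) / B_raw N l z)
        \<longlongrightarrow> Bp_fun N 1 l p (concat_vec 1 (\<lambda>_. u i) xi) (\<lambda>_. v j) / B_fun N l xi) (at ?x0 within S)"
      by (rule tendsto_Bp_fun_ratio[OF nongeneric _ nontrivial B_nz]) (use uv that in auto)
    then show ?thesis
      by (rule tendsto_mult_left)
  qed
  have rhs: "((\<lambda>z. ?c * det (mat k k (\<lambda>(i, j). 1 / (u i - v j)
          * (Bp_raw N 1 l p (concat_vec 1 (\<lambda>_. u i) z) (\<lambda>_. v j) / B_raw N l z))))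
      \<longlongrightarrow> ?c * det (mat k k (\<lambda>(i, j). 1 / (u i - v j)
          * (Bp_fun N 1 l p (concat_vec 1 (\<lambda>_. u i) xi) (\<lambda>_. v j) / B_fun N l xi))))
      (at ?x0 within S)"
    by (rule tendsto_mult_left, rule tendsto_det_mat, rule entries)
  have "\<forall>\<^sub>F z in at ?x0 within S. Bp_raw N k l p (concat_vec k u z) v / B_raw N l z
      = ?c * det (mat k k (\<lambda>(i, j). 1 / (u i - v j)
          * (Bp_raw N 1 l p (concat_vec 1 (\<lambda>_. u i) z) (\<lambda>_. v j) / B_raw N l z)))"
  proof -
    have "\<forall>\<^sub>F z in at ?x0 within S. B_raw N l z \<noteq> 0 \<and> z \<in> S"
      using tendsto_imp_eventually_ne[OF LB B_nz] by (auto simp: eventually_at_filter elim: eventually_mono)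
    then show ?thesis
    proof eventually_elim
      case (elim z)
      then have "\<forall>i<N. \<forall>j<N. i \<noteq> j \<longrightarrow> z i \<noteq> z j" "\<forall>i<k. \<forall>m<N. u i \<noteq> z m"
        using generic_avoidingD[of z N] unfolding S_def by auto
      with elim uv show ?case
        by (intro Bp_raw_ratio_eq_det_single_ratios) auto
    qed
  qed
  from Lim_transform_eventually[OF lhs this] show ?thesis
    by (rule tendsto_unique[OF nontrivial _ rhs])
qed

lemma Bp_fun_ratio_eq_det:
  assumes B_nz: "B_fun N l xi \<noteq> 0"
    and avoid: "\<forall>i<k. \<forall>j<N. u i \<noteq> xi j \<and> v i \<noteq> xi j"
    and distinct: "\<forall>i<k. \<forall>j<k. i \<noteq> j \<longrightarrow> u i \<noteq> u j \<and> v i \<noteq> v j"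
    and uv: "\<forall>i<k. \<forall>j<k. u i \<noteq> v j"
  shows "Bp_fun N k l p (concat_vec k u xi) v / B_fun N l xi
    = Dprod k k u (\<lambda>j. - v j) / (Vdm k u * Vdm k (\<lambda>j. - v j))
      * det (mat k k (\<lambda>(i, j). 1 / (u i - v j)
          * (Bp_fun N 1 l p (concat_vec 1 (\<lambda>_. u i) xi) (\<lambda>_. v j) / B_fun N l xi)))"
proof (cases "trunc_vec N xi \<in> generic_pts N")
  case True
  then have xi: "\<forall>i<N. \<forall>j<N. i \<noteq> j \<longrightarrow> xi i \<noteq> xi j"
    by (auto simp: generic_pts_def trunc_vec_def)
  have "Bp_fun N 1 l p (concat_vec 1 (\<lambda>_. u i) xi) (\<lambda>_. v j)
      = Bp_raw N 1 l p (concat_vec 1 (\<lambda>_. u i) xi) (\<lambda>_. v j)" if "i < k" "j < k" for i j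
    by (rule Bp_fun_concat_eq_Bp_raw[OF xi]) (use avoid uv that in auto)
  then have "mat k k (\<lambda>(i, j). 1 / (u i - v j)
          * (Bp_fun N 1 l p (concat_vec 1 (\<lambda>_. u i) xi) (\<lambda>_. v j) / B_fun N l xi))
      = mat k k (\<lambda>(i, j). 1 / (u i - v j)
          * (Bp_raw N 1 l p (concat_vec 1 (\<lambda>_. u i) xi) (\<lambda>_. v j) / B_raw N l xi))"
    by (intro cong_mat) (auto simp: B_fun_eq_B_raw[OF xi])
  moreover have "Bp_fun N k l p (concat_vec k u xi) v = Bp_raw N k l p (concat_vec k u xi) v"
    by (rule Bp_fun_concat_eq_Bp_raw[OF xi]) (use avoid distinct uv in auto)
  ultimately show ?thesis
    using B_nz avoid uv
    by (simp add: B_fun_eq_B_raw[OF xi] Bp_raw_ratio_eq_det_single_ratios[OF xi])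
next
  case False
  then show ?thesis
    using B_nz distinct uv by (rule Bp_fun_ratio_eq_det_nongeneric)
qed

lemma Bp_fun_single_ratio:
  assumes distinct: "\<forall>i<N. \<forall>j<N. i \<noteq> j \<longrightarrow> xi i \<noteq> xi j" and B_nz: "B_fun N l xi \<noteq> 0"
    and avoid: "\<forall>j<N. x \<noteq> xi j \<and> y \<noteq> xi j" and "x \<noteq> y"
  shows "Bp_fun N 1 l p (concat_vec 1 (\<lambda>_. x) xi) (\<lambda>_. y) / B_fun N l xi
    = (x - y) * (\<Prod>i<N. (y - xi i) / (x - xi i))
      * (exp (p * (x - y)) / (x - y)
         + vec N (\<lambda>j. exp (complex_of_real (l j) * x))
           \<bullet> (the (mat_inverse (A_mat N l xi)) *\<^sub>v vec N (\<lambda>i. exp (p * (xi i - y)) / (y - xi i))))"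
proof -
  have B: "B_fun N l xi = B_raw N l xi"
    by (rule B_fun_eq_B_raw[OF distinct])
  then have "det (A_mat N l xi) \<noteq> 0"
    using B_nz by (simp add: B_raw_eq)
  then obtain Ai where Ai: "mat_inverse (A_mat N l xi) = Some Ai" "Ai \<in> carrier_mat N N"
    "A_mat N l xi * Ai = 1\<^sub>m N"
    by (rule mat_inverse_exists[of _ N, rotated]) (auto simp: A_mat_def)
  have "Bp_fun N 1 l p (concat_vec 1 (\<lambda>_. x) xi) (\<lambda>_. y) = Bp_raw N 1 l p (concat_vec 1 (\<lambda>_. x) xi) (\<lambda>_. y)"
    by (rule Bp_fun_concat_eq_Bp_raw[OF distinct]) (use avoid \<open>x \<noteq> y\<close> in auto)
  then have "Bp_fun N 1 l p (concat_vec 1 (\<lambda>_. x) xi) (\<lambda>_. y) / B_fun N l xi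
      = (x - y) * (\<Prod>m<N. (y - xi m) / (x - xi m)) * schur_kernel N l p xi Ai x y"
    using Bp_raw_single_ratio[OF distinct Ai(2,3)] avoid by (simp add: B)
  with Ai show ?thesis
    by (simp add: schur_kernel_eq)
qed

theorem proposition3p3:
  fixes N k :: nat and l :: "nat \<Rightarrow> real" and p :: complex
    and xi u v :: "nat \<Rightarrow> complex"
  assumes l_W: "l \<in> weyl_chamber N"
    and B_nz: "B_fun N l xi \<noteq> 0"
  shows
    "((\<forall>i<k. \<forall>j<N. u i \<noteq> xi j \<and> v i \<noteq> xi j) \<and>
      (\<forall>i<k. \<forall>j<k. i \<noteq> j \<longrightarrow> u i \<noteq> u j \<and> v i \<noteq> v j) \<and>
      (\<forall>i<k. \<forall>j<k. u i \<noteq> v j) \<longrightarrow>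
     Bp_fun N k l p (concat_vec k u xi) v / B_fun N l xi =
       Dprod k k u (\<lambda>j. - v j) / (Vdm k u * Vdm k (\<lambda>j. - v j))
       * det (mat k k (\<lambda>(i,j). 1 / (u i - v j)
           * (Bp_fun N 1 l p (concat_vec 1 (\<lambda>_. u i) xi) (\<lambda>_. v j) / B_fun N l xi))))
    \<and>
    (\<forall>uu vv :: complex. (\<forall>i<N. \<forall>j<N. i \<noteq> j \<longrightarrow> xi i \<noteq> xi j) \<and>
       (\<forall>j<N. uu \<noteq> xi j \<and> vv \<noteq> xi j) \<and> uu \<noteq> vv \<and>
       invertible_mat (A_mat N l xi) \<longrightarrow>
     Bp_fun N 1 l p (concat_vec 1 (\<lambda>_. uu) xi) (\<lambda>_. vv) / B_fun N l xi =
       (uu - vv) * (\<Prod>i<N. (vv - xi i) / (uu - xi i))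
       * (exp (p * (uu - vv)) / (uu - vv)
          + vec N (\<lambda>j. exp (complex_of_real (l j) * uu))
            \<bullet> (the (mat_inverse (A_mat N l xi))
               *\<^sub>v vec N (\<lambda>i. exp (p * (xi i - vv)) / (vv - xi i)))))"
  by (intro conjI allI impI; elim conjE)
     (rule Bp_fun_ratio_eq_det[OF B_nz] Bp_fun_single_ratio[OF _ B_nz]; assumption)+

end
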